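(* For all $i,j\in I$, in $\mathbb{C}((x))[[\hbar]]$, $$\kappa_{i,j}(-x)\kappa_{j,i}(x)^{-1}\cdot\frac{x-a_{i,j}\hbar}{x+a_{i,j}\hbar}=\tilde g_{j,i}(e^{-x})^{-1}=\tilde g_{i,j}(e^x),\qquad \kappa_{i,j}(x-2\hbar)=\kappa_{j,i}(-x).$$
   Context: $A=(a_{i,j})_{i,j\in I}$ is a Cartan matrix of type $A$, $D$ or $E$ (symmetric, $a_{i,i}=2$, off-diagonal entries in $\{0,-1\}$); $\mu$ is a permutation of $I$ with $a_{\mu(i),\mu(j)}=a_{i,j}$, $N$ its order, $\xi=e^{2\pi i/N}$. $q=e^\hbar$. For $n\in\mathbb Z$, $[n]_v=\frac{v^n-v^{-n}}{v-v^{-1}}$ (Laurent polynomial in $v$), and $[n]_{q^{\partial_x}}$ is this Laurent polynomial in the operator $q^{\partial_x}=e^{\hbar\partial_x}$, with $q^{m\partial_x}g(x)=g(x+m\hbar)$ expanded in nonnegative powers of $\hbar$. $\vartheta_0(x)=\log\frac{e^{x/2}-e^{-x/2}}{x}$ and $\vartheta_k(x)=\log\frac{\xi^ke^{x/2}-e^{-x/2}}{\xi^k-1}$ for $0\neq k\in\mathbb{Z}_N$, all in $x\mathbb{C}[[x]]$. $\kappa_{i,j}(x)=\exp\big(\sum_{k\in\mathbb{Z}_N}[a_{\mu^k(i),j}]_{q^{\partial_x}}q^{\partial_x}\vartheta_k(x)\big)\in\mathbb{C}[[x,\hbar]]$; $\kappa_{i,j}(x-2\hbar)$ means $e^{-2\hbar\partial_x}\kappa_{i,j}(x)$.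 $\tilde g_{i,j}(y)=\prod_{k\in\mathbb{Z}_N}\frac{q^{a_{\mu^k(i),j}}-\xi^{-k}y}{1-\xi^{-k}q^{a_{\mu^k(i),j}}y}$, and $\tilde g_{i,j}(e^{\pm x})$ denotes the element of $\mathbb{C}((x))[[\hbar]]$ obtained by substituting $y=e^{\pm x}$, $q=e^\hbar$ and expanding (the denominators are invertible in $\mathbb{C}((x))[[\hbar]]$); $\frac{x-a\hbar}{x+a\hbar}$ is expanded in nonnegative powers of $\hbar$. *)

theory Defs
  imports "HOL-Analysis.Analysis" "HOL-Computational_Algebra.Formal_Laurent_Series"
begin

text \<open>C[[x]] = complex fps (variable x).
  C[[x,h]] = complex fps fps : outer variable h (hbar), coefficients in C[[x]].
  C((x))[[h]] = complex fls fps : outer variable h, coefficients in C((x)).\<close>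

definition cartan_ADE :: "('i::finite \<Rightarrow> 'i \<Rightarrow> int) \<Rightarrow> bool" where
  "cartan_ADE A \<longleftrightarrow>
     (\<forall>a b. A a b = A b a) \<and> (\<forall>a. A a a = 2) \<and>
     (\<forall>a b. a \<noteq> b \<longrightarrow> A a b \<in> {0, -1}) \<and>
     \<comment> \<open>finite type: positive definite\<close>
     (\<forall>v::'i \<Rightarrow> real. (\<exists>a. v a \<noteq> 0) \<longrightarrow> (\<Sum>a\<in>UNIV. \<Sum>b\<in>UNIV. v a * of_int (A a b) * v b) > 0) \<and>
     \<comment> \<open>indecomposable (connected Dynkin diagram)\<close>
     (\<forall>S. S \<noteq> {} \<and> S \<noteq> UNIV \<longrightarrow> (\<exists>a\<in>S. \<exists>b. b \<notin> S \<and> A a b \<noteq> 0))"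

definition perm_order :: "('i \<Rightarrow> 'i) \<Rightarrow> nat" where
  "perm_order \<mu> = (LEAST n. 0 < n \<and> \<mu> ^^ n = id)"

definition xi :: "nat \<Rightarrow> complex" where
  "xi N = exp (2 * of_real pi * \<i> / of_nat N)"

text \<open>logarithm of a power series with constant term 1: log(1 + G) = ln(1+X) composed with G\<close>
definition fps_log1 :: "complex fps \<Rightarrow> complex fps" where
  "fps_log1 F = fps_ln 1 oo (F - 1)"

text \<open>theta_0 and theta_k, k in Z_N nonzero (represented by 0 < k < N)\<close>
definition theta :: "nat \<Rightarrow> nat \<Rightarrow> complex fps" where
  "theta N k = (if k = 0
     then fps_log1 ((fps_exp (1/2) - fps_exp (-1/2)) / fps_X)
     else fps_log1 (fps_const (1 / (xi N ^ k - 1)) *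
                    (fps_const (xi N ^ k) * fps_exp (1/2) - fps_exp (-1/2))))"

text \<open>q^{m d/dx} = e^{m h d/dx} acting on C[[x,h]]: g(x) \<mapsto> g(x + m h)\<close>
definition qshift :: "int \<Rightarrow> complex fps fps \<Rightarrow> complex fps fps" where
  "qshift m G = Abs_fps (\<lambda>n. \<Sum>l\<le>n. fps_const (of_int m ^ l / fact l) * fps_nth_deriv l (G $ (n - l)))"

text \<open>[n]_{q^{d/dx}}, with [n]_v = sum_{k<n} v^(n-1-2k) for n>=0 and [-n]_v = -[n]_v\<close>
definition qnum_op :: "int \<Rightarrow> complex fps fps \<Rightarrow> complex fps fps" where
  "qnum_op n G = (if 0 \<le> n then (\<Sum>k<nat n. qshift (n - 1 - 2 * int k) G)
                  else - (\<Sum>k<nat (-n). qshift (- n - 1 - 2 * int k) G))"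

text \<open>exp of an element of C[[x,h]] with zero constant term: sum_n F^n/n!,
  which is coefficientwise finite\<close>
definition bexp :: "complex fps fps \<Rightarrow> complex fps fps" where
  "bexp F = Abs_fps (\<lambda>j. Abs_fps (\<lambda>i. \<Sum>n\<le>i + j. (F ^ n) $ j $ i / fact n))"

definition negx :: "complex fps fps \<Rightarrow> complex fps fps" where
  "negx F = Abs_fps (\<lambda>j. Abs_fps (\<lambda>i. (-1) ^ i * F $ j $ i))"

definition to_Lh :: "complex fps fps \<Rightarrow> complex fls fps" where
  "to_Lh F = Abs_fps (\<lambda>j. fps_to_fls (F $ j))"

text \<open>e^{c x + d h} in C[[x,h]]\<close>
definition biexp :: "complex \<Rightarrow> complex \<Rightarrow> complex fps fps" where
  "biexp c d = Abs_fps (\<lambda>j. fps_const (d ^ j / fact j) * fps_exp c)"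

definition kappa :: "('i \<Rightarrow> 'i \<Rightarrow> int) \<Rightarrow> ('i \<Rightarrow> 'i) \<Rightarrow> 'i \<Rightarrow> 'i \<Rightarrow> complex fps fps" where
  "kappa A \<mu> i j = (let N = perm_order \<mu> in
     bexp (\<Sum>k<N. qnum_op (A ((\<mu> ^^ k) i) j) (qshift 1 (fps_const (theta N k)))))"

text \<open>g-tilde_{i,j}(e^{s x}) for s = 1 or s = -1, with q = e^h, in C((x))[[h]]\<close>
definition gtilde_exp :: "('i \<Rightarrow> 'i \<Rightarrow> int) \<Rightarrow> ('i \<Rightarrow> 'i) \<Rightarrow> 'i \<Rightarrow> 'i \<Rightarrow> complex \<Rightarrow> complex fls fps" where
  "gtilde_exp A \<mu> i j s = (let N = perm_order \<mu> in
     \<Prod>k<N. (let a = of_int (A ((\<mu> ^^ k) i) j); c = fps_const (fps_const (inverse (xi N) ^ k)) in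
        to_Lh (biexp 0 a - c * biexp s 0) * inverse (to_Lh (1 - c * biexp s a))))"

definition xfrac :: "int \<Rightarrow> complex fls fps" where
  "xfrac a = (fps_const fls_X - of_int a * fps_X) * inverse (fps_const fls_X + of_int a * fps_X)"

end

(* Both the shift q^{m d/dx} and the reflection x -> -x are ring endomorphisms of C[[x,h]] that
   respect the (x,h)-adic filtration, so they commute with exp.  Since exp(theta_k) = f_k is an
   explicit series, kappa_{i,j} is the product over k of f_k(x+2h) f_k(x), 1 or 1/f_k(x+h),
   according as a_{mu^k(i),j} is 2, 0 or -1.  Writing z = xi^k, one has
   f_z(x) Q_z(x) = z e^{x/2} - e^{-x/2} with Q_1 = x and Q_z = z - 1 otherwise, hence
   f_z(-x) = f_{1/z}(x).  Reindexing k -> -k, which by the symmetry and mu-invariance of A turns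
   a_{mu^k(i),j} into a_{mu^k(j),i}, reduces all three identities factor by factor to identities
   between exponentials e^{cx+dh}; the single factor with z = 1 contributes (x - a h)/(x + a h). *)

theory Submission
  imports Defs "HOL-Combinatorics.Cycles"
begin

unbundle no vec_syntax

type_synonym bps = "complex fps fps"

abbreviation bconst :: "complex \<Rightarrow> bps" where
  "bconst c \<equiv> fps_const (fps_const c)"

section \<open>The exponential of bivariate power series\<close>

definition vanishes_below :: "nat \<Rightarrow> bps \<Rightarrow> bool" where
  "vanishes_below d F \<longleftrightarrow> (\<forall>j i. i + j < d \<longrightarrow> F $ j $ i = 0)"

lemma bps_mult_nth:
  "((F::bps) * G) $ j $ i = (\<Sum>k=0..j. \<Sum>l=0..i. F $ k $ l * G $ (j - k) $ (i - l))"
  by (simp add: fps_mult_nth fps_sum_nth)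

lemma vanishes_below_mult:
  assumes "vanishes_below a F" "vanishes_below b G"
  shows "vanishes_below (a + b) (F * G)"
  unfolding vanishes_below_def
proof (intro allI impI)
  fix j i assume ij: "i + j < a + b"
  have "F $ k $ l * G $ (j - k) $ (i - l) = 0" if "k \<in> {0..j}" "l \<in> {0..i}" for k l
  proof (cases "l + k < a")
    case True then show ?thesis using assms(1) by (simp add: vanishes_below_def)
  next
    case False
    then have "(i - l) + (j - k) < b" using ij that by auto
    then show ?thesis using assms(2) by (simp add: vanishes_below_def)
  qed
  then show "(F * G) $ j $ i = 0" unfolding bps_mult_nth by (intro sum.neutral ballI) auto
qed

lemma vanishes_below_0 [simp]: "vanishes_below 0 F"
  by (simp add: vanishes_below_def)

lemma vanishes_below_zero [simp]: "vanishes_below d 0"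
  by (simp add: vanishes_below_def)

lemma vanishes_below_mono: "vanishes_below d F \<Longrightarrow> e \<le> d \<Longrightarrow> vanishes_below e F"
  by (auto simp: vanishes_below_def)

lemma vanishes_below_add: "vanishes_below d F \<Longrightarrow> vanishes_below d G \<Longrightarrow> vanishes_below d (F + G)"
  by (simp add: vanishes_below_def)

lemma vanishes_below_diff: "vanishes_below d F \<Longrightarrow> vanishes_below d G \<Longrightarrow> vanishes_below d (F - G)"
  by (simp add: vanishes_below_def)

lemma vanishes_below_uminus: "vanishes_below d F \<Longrightarrow> vanishes_below d (- F)"
  by (simp add: vanishes_below_def)

lemma vanishes_below_sum:
  "(\<And>x. x \<in> S \<Longrightarrow> vanishes_below d (f x)) \<Longrightarrow> vanishes_below d (sum f S)"
  by (induction S rule: infinite_finite_induct) (auto intro: vanishes_below_add)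

lemma vanishes_below_mult_left: "vanishes_below d G \<Longrightarrow> vanishes_below d (F * G)"
  using vanishes_below_mult[of 0 F d G] by simp

lemma vanishes_below_mult_right: "vanishes_below d F \<Longrightarrow> vanishes_below d (F * G)"
  using vanishes_below_mult[of d F 0 G] by simp

lemma vanishes_below_power: "vanishes_below 1 F \<Longrightarrow> vanishes_below n (F ^ n)"
  by (induction n) (use vanishes_below_mult[of 1 F] in auto)

lemma vanishes_below_mult_diff:
  assumes "vanishes_below d (F - F')" "vanishes_below d (G - G')"
  shows "vanishes_below d (F * G - F' * G')"
proof -
  have "F * G - F' * G' = (F - F') * G + F' * (G - G')" by (simp add: algebra_simps)
  then show ?thesis
    using assms by (simp add: vanishes_below_add vanishes_below_mult_left vanishes_below_mult_right)
qed

lemma bps_eqI_vanishes_below_diff: "(\<And>M. vanishes_below (Suc M) (F - G)) \<Longrightarrow> F = (G::bps)"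
proof (intro fps_ext)
  fix j i
  assume "\<And>M. vanishes_below (Suc M) (F - G)"
  from this[of "i + j"] show "F $ j $ i = G $ j $ i" by (auto simp: vanishes_below_def)
qed

text \<open>Identities for bexp are proved by comparing truncations, which agree with it modulo
  (x, h)^(M+1).\<close>

definition exp_trunc :: "nat \<Rightarrow> bps \<Rightarrow> bps" where
  "exp_trunc M F = (\<Sum>n\<le>M. bconst (1 / fact n) * F ^ n)"

lemma bexp_nth_eq_exp_trunc_nth:
  assumes F: "vanishes_below 1 F" and ij: "i + j \<le> M"
  shows "bexp F $ j $ i = exp_trunc M F $ j $ i"
proof -
  have "exp_trunc M F $ j $ i = (\<Sum>n\<le>M. (F ^ n) $ j $ i / fact n)"
    by (simp add: exp_trunc_def fps_sum_nth)
  also have "\<dots> = (\<Sum>n\<le>i + j. (F ^ n) $ j $ i / fact n)"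
  proof (rule sum.mono_neutral_right)
    show "\<forall>n\<in>{..M} - {..i + j}. (F ^ n) $ j $ i / fact n = 0"
      using vanishes_below_power[OF F] by (auto simp: vanishes_below_def)
  qed (use ij in auto)
  finally show ?thesis by (simp add: bexp_def)
qed

lemma vanishes_below_bexp_diff_exp_trunc:
  "vanishes_below 1 F \<Longrightarrow> vanishes_below (Suc M) (bexp F - exp_trunc M F)"
  using bexp_nth_eq_exp_trunc_nth by (simp add: vanishes_below_def)

lemma exp_trunc_add:
  "exp_trunc M (F + G)
     = (\<Sum>(a, b)\<in>{(a, b). a + b \<le> M}. bconst (1 / fact a) * bconst (1 / fact b) * F ^ a * G ^ b)"
proof -
  define g where "g a b = bconst (1 / fact a) * bconst (1 / fact b) * F ^ a * G ^ b" for a b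
  have "bconst (1 / fact n) * (F + G) ^ n = (\<Sum>a\<le>n. g a (n - a))" for n
  proof -
    have "bconst (1 / fact n) * (F + G) ^ n
        = (\<Sum>a\<le>n. bconst (1 / fact n) * of_nat (n choose a) * F ^ a * G ^ (n - a))"
      by (simp add: binomial_ring sum_distrib_left mult.assoc)
    also have "\<dots> = (\<Sum>a\<le>n. g a (n - a))"
    proof (rule sum.cong[OF refl])
      fix a assume a: "a \<in> {..n}"
      have "(1 / fact n) * of_nat (n choose a) = (1 / fact a) * (1 / fact (n - a) :: complex)"
        using a by (simp add: binomial_fact field_simps)
      then have "bconst (1 / fact n) * of_nat (n choose a) = bconst (1 / fact a) * bconst (1 / fact (n - a))"
        by (metis fps_const_mult fps_of_nat of_nat_fact)
      then show "bconst (1 / fact n) * of_nat (n choose a) * F ^ a * G ^ (n - a) = g a (n - a)"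
        by (simp add: g_def)
    qed
    finally show ?thesis .
  qed
  then have "exp_trunc M (F + G) = (\<Sum>n\<le>M. \<Sum>a\<le>n. g a (n - a))"
    by (simp add: exp_trunc_def)
  also have "\<dots> = (\<Sum>(a, b)\<in>{(a, b). a + b \<le> M}. g a b)"
    by (rule sum.triangle_reindex_eq[symmetric])
  finally show ?thesis by (simp add: g_def)
qed

lemma vanishes_below_exp_trunc_add:
  assumes F: "vanishes_below 1 F" and G: "vanishes_below 1 G"
  shows "vanishes_below (Suc M) (exp_trunc M F * exp_trunc M G - exp_trunc M (F + G))"
proof -
  define g where "g a b = bconst (1 / fact a) * bconst (1 / fact b) * F ^ a * G ^ b" for a b
  have square: "exp_trunc M F * exp_trunc M G = (\<Sum>(a, b)\<in>{..M} \<times> {..M}. g a b)"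
    by (simp add: exp_trunc_def sum_product sum.cartesian_product g_def algebra_simps)
  have "exp_trunc M F * exp_trunc M G - exp_trunc M (F + G)
      = (\<Sum>(a, b)\<in>{..M} \<times> {..M} - {(a, b). a + b \<le> M}. g a b)"
    unfolding exp_trunc_add g_def[symmetric] square
    by (subst sum.subset_diff[of "{(a, b). a + b \<le> M}"]) auto
  also have "vanishes_below (Suc M) \<dots>"
  proof (rule vanishes_below_sum)
    fix x assume x: "x \<in> {..M} \<times> {..M} - {(a, b). a + b \<le> M}"
    obtain a b where ab: "x = (a, b)" by force
    have "Suc M \<le> a + b" using x ab by auto
    moreover have "vanishes_below (a + b) (g a b)"
      using vanishes_below_mult[OF vanishes_below_power[OF F] vanishes_below_power[OF G]]
      by (simp add: g_def mult.assoc vanishes_below_mult_left)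
    ultimately show "vanishes_below (Suc M) (case x of (a, b) \<Rightarrow> g a b)"
      using ab vanishes_below_mono by simp
  qed
  finally show ?thesis .
qed

lemma bexp_add:
  assumes F: "vanishes_below 1 F" and G: "vanishes_below 1 G"
  shows "bexp (F + G) = bexp F * bexp G"
proof (rule bps_eqI_vanishes_below_diff)
  fix M
  have FG: "vanishes_below 1 (F + G)" using F G by (rule vanishes_below_add)
  have "bexp (F + G) - bexp F * bexp G =
      (bexp (F + G) - exp_trunc M (F + G)) - (exp_trunc M F * exp_trunc M G - exp_trunc M (F + G))
      - (bexp F * bexp G - exp_trunc M F * exp_trunc M G)"
    by (simp add: algebra_simps)
  then show "vanishes_below (Suc M) (bexp (F + G) - bexp F * bexp G)"
    by (metis F G FG vanishes_below_bexp_diff_exp_trunc vanishes_below_exp_trunc_add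
        vanishes_below_mult_diff vanishes_below_diff)
qed

lemma bexp_0 [simp]: "bexp 0 = 1"
proof (intro fps_ext)
  fix j i
  have "(\<Sum>n\<le>i + j. (0::bps) ^ n $ j $ i / fact n) = (\<Sum>n\<le>i + j. if n = 0 then 1 $ j $ i else 0)"
    by (rule sum.cong) (auto simp: power_0_left)
  then show "bexp 0 $ j $ i = 1 $ j $ i" by (simp add: bexp_def)
qed

lemma bexp_sum:
  "(\<And>x. x \<in> S \<Longrightarrow> vanishes_below 1 (f x)) \<Longrightarrow> bexp (sum f S) = (\<Prod>x\<in>S. bexp (f x))"
  by (induction S rule: infinite_finite_induct) (auto simp: bexp_add vanishes_below_sum)

lemma bexp_uminus_mult: "vanishes_below 1 F \<Longrightarrow> bexp (- F) * bexp F = 1"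
  using bexp_add[OF vanishes_below_uminus] by fastforce

lemma bexp_fps_const: "g $ 0 = 0 \<Longrightarrow> bexp (fps_const g) = fps_const (fps_exp 1 oo g)"
  by (intro fps_ext) (auto simp: bexp_def fps_compose_nth atMost_atLeast0)

lemma fps_log1_nth_0 [simp]: "fps_log1 F $ 0 = 0"
  by (simp add: fps_log1_def)

lemma fps_exp_compose_log1:
  assumes "F $ 0 = 1"
  shows "fps_exp 1 oo fps_log1 F = (F :: complex fps)"
proof -
  let ?E = "fps_exp (1::complex) - 1"
  have G0: "(F - 1) $ 0 = 0" using assms by simp
  have L0: "fps_inv ?E $ 0 = 0" by (simp add: fps_inv_def)
  have "?E oo fps_log1 F = ?E oo (fps_inv ?E oo (F - 1))"
    by (simp add: fps_log1_def fps_ln_fps_exp_inv)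
  also have "\<dots> = (?E oo fps_inv ?E) oo (F - 1)"
    by (rule fps_compose_assoc[OF G0 L0])
  also have "\<dots> = F - 1"
    using fps_inv_fps_exp_compose(2)[of "1::complex"] G0 by simp
  finally have "?E oo fps_log1 F = F - 1" .
  then show ?thesis by (simp add: fps_compose_sub_distrib)
qed

locale filtered_endo =
  fixes \<phi> :: "bps \<Rightarrow> bps"
  assumes add: "\<phi> (F + G) = \<phi> F + \<phi> G"
    and mult: "\<phi> (F * G) = \<phi> F * \<phi> G"
    and bconst: "\<phi> (bconst c) = bconst c"
    and vanishes_below: "vanishes_below d F \<Longrightarrow> vanishes_below d (\<phi> F)"
begin

lemma zero: "\<phi> 0 = 0"
  using bconst[of 0] by simp

lemma one: "\<phi> 1 = 1"
  using bconst[of 1] by simp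

lemma uminus: "\<phi> (- F) = - \<phi> F"
  using add[of F "- F"] zero by (simp add: eq_neg_iff_add_eq_0 add.commute)

lemma diff: "\<phi> (F - G) = \<phi> F - \<phi> G"
  using add[of F "- G"] uminus[of G] by simp

lemma sum: "\<phi> (sum f S) = (\<Sum>x\<in>S. \<phi> (f x))"
  by (induction S rule: infinite_finite_induct) (auto simp: zero add)

lemma prod: "\<phi> (prod f S) = (\<Prod>x\<in>S. \<phi> (f x))"
  by (induction S rule: infinite_finite_induct) (auto simp: one mult)

lemma power: "\<phi> (F ^ n) = \<phi> F ^ n"
  by (induction n) (auto simp: one mult)

lemma exp_trunc: "\<phi> (exp_trunc M F) = exp_trunc M (\<phi> F)"
  by (simp add: exp_trunc_def sum mult bconst power)

lemma bexp:
  assumes F: "vanishes_below 1 F"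
  shows "\<phi> (bexp F) = bexp (\<phi> F)"
proof (rule bps_eqI_vanishes_below_diff)
  fix M
  have "\<phi> (bexp F) - bexp (\<phi> F) = \<phi> (bexp F - exp_trunc M F) - (bexp (\<phi> F) - exp_trunc M (\<phi> F))"
    by (simp add: diff exp_trunc)
  then show "vanishes_below (Suc M) (\<phi> (bexp F) - bexp (\<phi> F))"
    by (metis F vanishes_below vanishes_below_bexp_diff_exp_trunc vanishes_below_diff)
qed

end

section \<open>Shift and reflection of x\<close>

lemma fps_const_sum: "fps_const (sum f S) = (\<Sum>x\<in>S. fps_const (f x :: 'a::comm_monoid_add))"
  by (induction S rule: infinite_finite_induct) (auto simp flip: fps_const_add)

lemma fps_nth_deriv_nth: "fps_nth_deriv l g $ i = pochhammer (of_nat (i + 1)) l * g $ (i + l)"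
  by (induction l arbitrary: g) (simp_all add: pochhammer_rec' algebra_simps)

lemma fps_nth_deriv_fps_nth_deriv: "fps_nth_deriv l (fps_nth_deriv k g) = fps_nth_deriv (l + k) g"
  by (induction k arbitrary: g) simp_all

lemma qshift_nth:
  "qshift m G $ n = (\<Sum>l\<le>n. fps_const (of_int m ^ l / fact l) * fps_nth_deriv l (G $ (n - l)))"
  by (simp add: qshift_def)

lemma qshift_nth_nth: "qshift m G $ n $ i =
   (\<Sum>l\<le>n. of_int m ^ l / fact l * pochhammer (of_nat (i + 1)) l * G $ (n - l) $ (i + l))"
  by (simp add: qshift_def fps_sum_nth fps_nth_deriv_nth mult.assoc)

lemma qshift_nth_0: "qshift m G $ 0 = G $ 0"
  by (simp add: qshift_nth)

lemma qshift_add: "qshift m (F + G) = qshift m F + qshift m G"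
  by (rule fps_ext) (simp add: qshift_nth sum.distrib algebra_simps)

lemma qshift_bconst_mult: "qshift m (bconst c * G) = bconst c * qshift m G"
  by (rule fps_ext) (simp add: qshift_nth sum_distrib_left algebra_simps)

lemma qshift_fps_const_nth:
  "qshift m (fps_const g) $ n = fps_const (of_int m ^ n / fact n) * fps_nth_deriv n g"
proof -
  have "qshift m (fps_const g) $ n
      = (\<Sum>l\<in>{n}. fps_const (of_int m ^ l / fact l) * fps_nth_deriv l (fps_const g $ (n - l)))"
    unfolding qshift_nth by (rule sum.mono_neutral_right) auto
  then show ?thesis by simp
qed

lemma qshift_bconst: "qshift m (bconst c) = bconst c"
  by (rule fps_ext) (simp add: qshift_fps_const_nth)

lemma vanishes_below_qshift: "vanishes_below d G \<Longrightarrow> vanishes_below d (qshift m G)"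
  unfolding vanishes_below_def qshift_nth_nth by (auto intro!: sum.neutral)

definition deriv_x :: "bps \<Rightarrow> bps" where
  "deriv_x G = Abs_fps (\<lambda>n. fps_deriv (G $ n))"

lemma deriv_x_nth [simp]: "deriv_x G $ n = fps_deriv (G $ n)"
  by (simp add: deriv_x_def)

lemma deriv_x_mult: "deriv_x (F * G) = deriv_x F * G + F * deriv_x G"
  by (rule fps_ext) (simp add: fps_mult_nth fps_deriv_sum sum.distrib)

text \<open>The h-derivative of g(x + m h) is m g'(x + m h); this lets qshift_mult be proved by
  induction on the h-degree.\<close>

lemma fps_deriv_qshift:
  "fps_deriv (qshift m G) = qshift m (fps_deriv G + bconst (of_int m) * deriv_x G)"
proof (rule fps_ext)
  fix n
  define c where "c l = fps_const (of_int m ^ l / fact l :: complex)" for l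
  have cS: "of_nat (Suc l) * c (Suc l) = fps_const (of_int m) * c l" for l
    by (simp add: c_def fps_of_nat[symmetric] field_simps del: of_nat_Suc)
  have "fps_deriv (qshift m G) $ n
      = of_nat (Suc n) * (\<Sum>l\<le>Suc n. c l * fps_nth_deriv l (G $ (Suc n - l)))"
    by (simp add: qshift_nth c_def)
  also have "\<dots> = (\<Sum>l\<le>Suc n. of_nat (Suc n - l) * (c l * fps_nth_deriv l (G $ (Suc n - l))))
                 + (\<Sum>l\<le>Suc n. of_nat l * (c l * fps_nth_deriv l (G $ (Suc n - l))))"
    by (simp add: sum_distrib_left sum.distrib[symmetric] of_nat_diff ring_distribs)
  also have "(\<Sum>l\<le>Suc n. of_nat (Suc n - l) * (c l * fps_nth_deriv l (G $ (Suc n - l))))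
      = (\<Sum>l\<le>n. c l * fps_nth_deriv l (of_nat (Suc n - l) * G $ (Suc n - l)))"
    by (simp add: fps_of_nat[symmetric] algebra_simps del: of_nat_Suc)
  also have "(\<Sum>l\<le>Suc n. of_nat l * (c l * fps_nth_deriv l (G $ (Suc n - l))))
      = (\<Sum>l\<le>n. fps_const (of_int m) * (c l * fps_nth_deriv l (fps_deriv (G $ (n - l)))))"
    by (subst sum.atMost_Suc_shift) (simp add: cS mult.assoc[symmetric] del: of_nat_Suc)
  also have "(\<Sum>l\<le>n. c l * fps_nth_deriv l (of_nat (Suc n - l) * G $ (Suc n - l)))
      + (\<Sum>l\<le>n. fps_const (of_int m) * (c l * fps_nth_deriv l (fps_deriv (G $ (n - l)))))
      = qshift m (fps_deriv G + bconst (of_int m) * deriv_x G) $ n"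
    by (simp add: qshift_nth c_def sum.distrib[symmetric] algebra_simps Suc_diff_le del: of_nat_Suc)
  finally show "fps_deriv (qshift m G) $ n = qshift m (fps_deriv G + bconst (of_int m) * deriv_x G) $ n" .
qed

lemma qshift_mult: "qshift m (F * G) = qshift m F * qshift m G"
proof (rule fps_ext)
  fix n show "qshift m (F * G) $ n = (qshift m F * qshift m G) $ n"
  proof (induction n arbitrary: F G)
    case 0
    then show ?case by (simp add: qshift_nth_0)
  next
    case (Suc n)
    let ?q = "qshift m"
    let ?c = "bconst (of_int m)"
    have "of_nat (Suc n) * ?q (F * G) $ Suc n = fps_deriv (?q (F * G)) $ n"
      by simp
    also have "\<dots> = ?q (fps_deriv F * G + F * fps_deriv G + ?c * (deriv_x F * G) + ?c * (F * deriv_x G)) $ n"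
      by (simp add: fps_deriv_qshift deriv_x_mult algebra_simps)
    also have "\<dots> = ?q (fps_deriv F * G) $ n + ?q (F * fps_deriv G) $ n
        + (?c * ?q (deriv_x F * G)) $ n + (?c * ?q (F * deriv_x G)) $ n"
      by (simp add: qshift_add qshift_bconst_mult)
    also have "\<dots> = (?q (fps_deriv F) * ?q G) $ n + (?q F * ?q (fps_deriv G)) $ n
        + (?c * (?q (deriv_x F) * ?q G)) $ n + (?c * (?q F * ?q (deriv_x G))) $ n"
      by (simp add: Suc)
    also have "\<dots> = fps_deriv (?q F * ?q G) $ n"
      by (simp only: fps_deriv_mult fps_deriv_qshift qshift_add qshift_bconst_mult distrib_left
          distrib_right) (simp add: algebra_simps)
    also have "\<dots> = of_nat (Suc n) * (?q F * ?q G) $ Suc n"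
      unfolding fps_deriv_nth by simp
    finally show ?case
      by (metis mult_cancel_left of_nat_eq_0_iff nat.distinct(1) fps_of_nat)
  qed
qed

interpretation qshift: filtered_endo "qshift m" for m
  by unfold_locales (simp_all add: qshift_add qshift_mult qshift_bconst vanishes_below_qshift)

lemma qshift_qshift_fps_const: "qshift s (qshift t (fps_const g)) = qshift (s + t) (fps_const g)"
proof (rule fps_ext)
  fix n
  have "qshift s (qshift t (fps_const g)) $ n
      = (\<Sum>l\<le>n. fps_const (of_int s ^ l / fact l * (of_int t ^ (n - l) / fact (n - l))) * fps_nth_deriv n g)"
    unfolding qshift_nth[of s] qshift_fps_const_nth
    by (simp add: fps_nth_deriv_fps_nth_deriv mult.assoc[symmetric])
  also have "\<dots> = fps_const (\<Sum>l\<le>n. of_int s ^ l / fact l * (of_int t ^ (n - l) / fact (n - l))) * fps_nth_deriv n g"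
    by (simp add: sum_distrib_right fps_const_sum)
  also have "(\<Sum>l\<le>n. of_int s ^ l / fact l * (of_int t ^ (n - l) / fact (n - l)) :: complex)
      = (of_int s + of_int t) ^ n / fact n"
  proof -
    have "(of_int s + of_int t) ^ n / fact n
        = (\<Sum>l\<le>n. of_nat (n choose l) * of_int s ^ l * (of_int t :: complex) ^ (n - l) / fact n)"
      by (simp add: binomial_ring sum_divide_distrib)
    also have "\<dots> = (\<Sum>l\<le>n. of_int s ^ l / fact l * (of_int t ^ (n - l) / fact (n - l)))"
      by (rule sum.cong) (auto simp: binomial_fact field_simps)
    finally show ?thesis by simp
  qed
  finally show "qshift s (qshift t (fps_const g)) $ n = qshift (s + t) (fps_const g) $ n"
    by (simp add: qshift_fps_const_nth)
qed

lemma qshift_fps_exp: "qshift t (fps_const (fps_exp c)) = biexp c (c * of_int t)"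
proof (rule fps_ext)
  fix n
  have "of_int t ^ n / fact n * c ^ n = (c * of_int t) ^ n / (fact n :: complex)"
    by (simp add: power_mult_distrib)
  then show "qshift t (fps_const (fps_exp c)) $ n = biexp c (c * of_int t) $ n"
    by (simp add: qshift_fps_const_nth biexp_def mult.assoc[symmetric])
qed

lemma qshift_fps_X: "qshift t (fps_const fps_X) = fps_const fps_X + bconst (of_int t) * fps_X"
proof (rule fps_ext)
  fix n show "qshift t (fps_const fps_X) $ n = (fps_const fps_X + bconst (of_int t) * fps_X) $ n"
    by (cases n) (auto simp: qshift_fps_const_nth)
qed

lemma negx_nth_nth [simp]: "negx F $ j $ i = (-1) ^ i * F $ j $ i"
  by (simp add: negx_def)

lemma negx_mult: "negx (F * G) = negx F * negx G"
proof (intro fps_ext)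
  fix j i
  have sign: "(-1::complex) ^ i = (-1) ^ l * (-1) ^ (i - l)" if "l \<in> {0..i}" for l
    using that by (simp add: power_add[symmetric])
  have "negx (F * G) $ j $ i = (\<Sum>k=0..j. \<Sum>l=0..i. (-1) ^ i * (F $ k $ l * G $ (j - k) $ (i - l)))"
    by (simp add: bps_mult_nth sum_distrib_left)
  also have "\<dots> = (\<Sum>k=0..j. \<Sum>l=0..i. (-1) ^ l * F $ k $ l * ((-1) ^ (i - l) * G $ (j - k) $ (i - l)))"
    by (intro sum.cong refl) (simp add: sign)
  also have "\<dots> = (negx F * negx G) $ j $ i"
    by (simp add: bps_mult_nth)
  finally show "negx (F * G) $ j $ i = (negx F * negx G) $ j $ i" .
qed

interpretation negx: filtered_endo negx
  by unfold_locales
    (auto simp: negx_mult vanishes_below_def fps_eq_iff algebra_simps)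

lemma negx_biexp: "negx (biexp c d) = biexp (- c) d"
  by (intro fps_ext) (simp add: biexp_def power_minus[of c])

lemma negx_fps_const_fps_X: "negx (fps_const fps_X) = - fps_const fps_X"
  by (intro fps_ext) auto

lemma negx_fps_X: "negx fps_X = fps_X"
  by (intro fps_ext) auto

lemma biexp_mult: "biexp c d * biexp c' d' = biexp (c + c') (d + d')"
proof (rule fps_ext)
  fix n
  have "(biexp c d * biexp c' d') $ n
      = (\<Sum>k=0..n. fps_const (d ^ k / fact k * (d' ^ (n - k) / fact (n - k)))) * fps_exp (c + c')"
    by (simp add: fps_mult_nth biexp_def fps_exp_add_mult sum_distrib_right sum_distrib_left mult_ac)
  also have "(\<Sum>k=0..n. fps_const (d ^ k / fact k * (d' ^ (n - k) / fact (n - k))))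
      = fps_const ((d + d') ^ n / fact n)"
  proof -
    have "(d + d') ^ n / fact n = (\<Sum>l\<le>n. of_nat (n choose l) * d ^ l * d' ^ (n - l) / fact n)"
      by (simp add: binomial_ring sum_divide_distrib)
    also have "\<dots> = (\<Sum>l\<le>n. d ^ l / fact l * (d' ^ (n - l) / fact (n - l)))"
      by (rule sum.cong) (auto simp: binomial_fact field_simps)
    finally show ?thesis by (simp add: fps_const_sum atMost_atLeast0)
  qed
  finally show "(biexp c d * biexp c' d') $ n = biexp (c + c') (d + d') $ n"
    by (simp add: biexp_def)
qed

lemma biexp_0_0 [simp]: "biexp 0 0 = 1"
  by (rule fps_ext) (simp add: biexp_def)

section \<open>The factors of kappa and g-tilde\<close>

text \<open>For z = xi^k, theta_exp z is exp(theta_k).  Indexing by the root z rather than by k turns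
  the pairing k <-> -k into z <-> 1/z.\<close>

definition theta_exp :: "complex \<Rightarrow> complex fps" where
  "theta_exp z = (if z = 1 then (fps_exp (1/2) - fps_exp (-1/2)) / fps_X
     else fps_const (1 / (z - 1)) * (fps_const z * fps_exp (1/2) - fps_exp (-1/2)))"

lemma theta_exp_nth_0 [simp]: "theta_exp z $ 0 = 1"
proof (cases "z = 1")
  case False
  then have "z - 1 \<noteq> 0" by simp
  then show ?thesis by (simp add: theta_exp_def)
qed (simp add: theta_exp_def)

lemma theta_exp_1_mult_fps_X: "theta_exp 1 * fps_X = fps_exp (1/2) - fps_exp (-1/2)"
  by (rule fps_ext) (simp add: theta_exp_def)

text \<open>Writing f_z = theta_exp z and s = x + t h: theta_shift z t is f_z(s), twisted_sinh z t is
  z e^(s/2) - e^(-s/2), and theta_denom z t is s if z = 1 and z - 1 otherwise.\<close>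

definition theta_shift :: "complex \<Rightarrow> int \<Rightarrow> bps" where
  "theta_shift z t = qshift t (fps_const (theta_exp z))"

definition twisted_sinh :: "complex \<Rightarrow> complex \<Rightarrow> bps" where
  "twisted_sinh z t = bconst z * biexp (1/2) ((1/2) * t) - biexp (-1/2) ((-1/2) * t)"

definition theta_denom :: "complex \<Rightarrow> complex \<Rightarrow> bps" where
  "theta_denom z t = (if z = 1 then fps_const fps_X + bconst t * fps_X else bconst (z - 1))"

lemma theta_denom_nth_0_nonzero: "theta_denom z t $ 0 \<noteq> 0"
  by (simp add: theta_denom_def fps_eq_iff)

lemma theta_shift_mult_denom: "theta_shift z t * theta_denom z (of_int t) = twisted_sinh z (of_int t)"
proof (cases "z = 1")
  case True
  have "fps_const (theta_exp 1 * fps_X) = fps_const (theta_exp 1) * fps_const fps_X"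
    by simp
  then have "theta_shift z t * theta_denom z (of_int t) = qshift t (fps_const (theta_exp 1 * fps_X))"
    using True by (simp only: qshift.mult) (simp add: theta_shift_def theta_denom_def qshift_fps_X)
  also have "\<dots> = twisted_sinh z (of_int t)"
    using True
    by (simp only: theta_exp_1_mult_fps_X fps_const_sub[symmetric] qshift.diff qshift_fps_exp)
      (simp add: twisted_sinh_def)
  finally show ?thesis .
next
  case False
  have "fps_const (theta_exp z)
      = bconst (1 / (z - 1)) * (bconst z * fps_const (fps_exp (1/2)) - fps_const (fps_exp (-1/2)))"
    using False by (simp add: theta_exp_def)
  then have "theta_shift z t = bconst (1 / (z - 1)) * twisted_sinh z (of_int t)"
    by (simp only: theta_shift_def qshift.mult qshift_bconst qshift.diff qshift_fps_exp)
      (simp add: twisted_sinh_def)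
  then show ?thesis
    using False by (simp add: theta_denom_def mult_ac)
qed

lemma negx_twisted_sinh:
  assumes "z * z' = 1"
  shows "negx (twisted_sinh z t) = - bconst z * twisted_sinh z' (- t)"
proof -
  let ?P = "biexp (1/2) ((1/2) * - t)" and ?Q = "biexp (-1/2) ((-1/2) * - t)"
  have ring: "- a * (b * P - Q) = a * Q - (a * b) * P" for a b P Q :: bps
    by (simp add: algebra_simps)
  have "negx (twisted_sinh z t) = bconst z * ?Q - ?P"
    by (simp add: twisted_sinh_def negx.diff negx.mult negx.bconst negx_biexp)
  also have "\<dots> = - bconst z * (bconst z' * ?P - ?Q)"
    unfolding ring using assms by simp
  also have "\<dots> = - bconst z * twisted_sinh z' (- t)"
    by (simp only: twisted_sinh_def)
  finally show ?thesis .
qed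

lemma negx_theta_denom:
  assumes "z * z' = 1"
  shows "negx (theta_denom z t) = - bconst z * theta_denom z' (- t)"
proof (cases "z = 1")
  case True
  then have "z' = 1" using assms by simp
  with True show ?thesis
    by (simp add: theta_denom_def negx.add negx.mult negx.bconst negx_fps_const_fps_X negx_fps_X)
next
  case False
  then have "z' \<noteq> 1" "z - 1 = - (z * (z' - 1))" using assms by (auto simp: algebra_simps)
  with False show ?thesis by (simp add: theta_denom_def negx.bconst)
qed

lemma negx_theta_shift:
  assumes zz': "z * z' = 1"
  shows "negx (theta_shift z t) = theta_shift z' (- t)"
proof -
  let ?Q' = "theta_denom z' (of_int (- t))"
  have "negx (theta_shift z t) * (- bconst z * ?Q') = negx (theta_shift z t * theta_denom z (of_int t))"
    using negx_theta_denom[OF zz'] by (simp add: negx.mult)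
  also have "\<dots> = - bconst z * twisted_sinh z' (of_int (- t))"
    using negx_twisted_sinh[OF zz'] by (simp add: theta_shift_mult_denom)
  also have "\<dots> = theta_shift z' (- t) * (- bconst z * ?Q')"
    using theta_shift_mult_denom[of z' "- t"] by (simp add: mult_ac)
  finally show ?thesis
    using zz' theta_denom_nth_0_nonzero[of z' "of_int (- t)"] by (auto simp: mult_right_cancel)
qed

lemma vanishes_below_1_fps_const: "g $ 0 = 0 \<Longrightarrow> vanishes_below 1 (fps_const g)"
  by (simp add: vanishes_below_def)

definition kappa_factor :: "complex \<Rightarrow> int \<Rightarrow> bps" where
  "kappa_factor z b = bexp (qnum_op b (qshift 1 (fps_const (fps_log1 (theta_exp z)))))"

lemma bexp_qshift_log_theta_exp:
  "bexp (qshift e (qshift 1 (fps_const (fps_log1 (theta_exp z))))) = theta_shift z (e + 1)"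
proof -
  have log: "vanishes_below 1 (fps_const (fps_log1 (theta_exp z)))"
    by (rule vanishes_below_1_fps_const) simp
  have "bexp (qshift e (qshift 1 (fps_const (fps_log1 (theta_exp z)))))
      = qshift e (qshift 1 (bexp (fps_const (fps_log1 (theta_exp z)))))"
    using log by (simp add: qshift.bexp vanishes_below_qshift)
  also have "bexp (fps_const (fps_log1 (theta_exp z))) = fps_const (theta_exp z)"
    by (simp add: bexp_fps_const fps_exp_compose_log1)
  finally show ?thesis by (simp add: qshift_qshift_fps_const theta_shift_def)
qed

lemma vanishes_below_qshift_log_theta_exp:
  "vanishes_below 1 (qshift e (qshift 1 (fps_const (fps_log1 (theta_exp z)))))"
  by (intro vanishes_below_qshift vanishes_below_1_fps_const) simp

lemma kappa_factor_2: "kappa_factor z 2 = theta_shift z 2 * theta_shift z 0"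
proof -
  let ?T = "qshift 1 (fps_const (fps_log1 (theta_exp z)))"
  have "qnum_op 2 ?T = qshift 1 ?T + qshift (-1) ?T"
    by (simp add: qnum_op_def lessThan_nat_numeral)
  then show ?thesis
    by (simp add: kappa_factor_def bexp_qshift_log_theta_exp
        bexp_add[OF vanishes_below_qshift_log_theta_exp vanishes_below_qshift_log_theta_exp])
qed

lemma kappa_factor_0: "kappa_factor z 0 = 1"
  by (simp add: kappa_factor_def qnum_op_def)

lemma kappa_factor_minus_1: "kappa_factor z (-1) * theta_shift z 1 = 1"
proof -
  let ?T = "qshift 1 (fps_const (fps_log1 (theta_exp z)))"
  have "qnum_op (-1) ?T = - qshift 0 ?T"
    by (simp add: qnum_op_def)
  then show ?thesis
    using bexp_uminus_mult[OF vanishes_below_qshift_log_theta_exp[of 0 z]]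
      bexp_qshift_log_theta_exp[of 0 z]
    by (simp add: kappa_factor_def)
qed

lemma qshift_theta_shift: "qshift s (theta_shift z t) = theta_shift z (s + t)"
  by (simp add: theta_shift_def qshift_qshift_fps_const)

lemma qshift_kappa_factor_minus_1: "qshift (-2) (kappa_factor z (-1)) * theta_shift z (-1) = 1"
  using arg_cong[OF kappa_factor_minus_1[of z], of "qshift (-2)"]
  by (simp add: qshift.mult qshift.one qshift_theta_shift)

lemma negx_kappa_factor_2:
  assumes "z * z' = 1"
  shows "negx (kappa_factor z 2) = theta_shift z' (-2) * theta_shift z' 0"
  by (simp add: kappa_factor_2 negx.mult negx_theta_shift[OF assms])

lemma negx_kappa_factor_minus_1:
  assumes "z * z' = 1"
  shows "negx (kappa_factor z (-1)) * theta_shift z' (-1) = 1"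
  using arg_cong[OF kappa_factor_minus_1[of z], of negx]
  by (simp add: negx.mult negx.one negx_theta_shift[OF assms])

lemma qshift_kappa_factor:
  assumes b: "b \<in> {2, 0, -1}" and zz': "z * z' = 1"
  shows "qshift (-2) (kappa_factor z' b) = negx (kappa_factor z b)"
proof -
  consider "b = 2" | "b = 0" | "b = -1" using b by auto
  then show ?thesis
  proof cases
    case 1
    show ?thesis
      unfolding 1 negx_kappa_factor_2[OF zz']
      by (simp add: kappa_factor_2 qshift.mult qshift_theta_shift mult.commute)
  next
    case 2
    then show ?thesis by (simp add: kappa_factor_0 qshift.one negx.one)
  next
    case 3
    have "theta_shift z' (-1) \<noteq> 0"
      using qshift_kappa_factor_minus_1[of z'] by auto
    with 3 show ?thesis
      using qshift_kappa_factor_minus_1[of z'] negx_kappa_factor_minus_1[OF zz']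
      by (metis mult_right_cancel)
  qed
qed

text \<open>The numerator q^a - w y and the denominator 1 - w q^a y of a factor of g-tilde, at
  y = e^(s x) and q = e^h.\<close>

definition gtilde_num :: "complex \<Rightarrow> complex \<Rightarrow> complex \<Rightarrow> bps" where
  "gtilde_num w s a = biexp 0 a - bconst w * biexp s 0"

definition gtilde_den :: "complex \<Rightarrow> complex \<Rightarrow> complex \<Rightarrow> bps" where
  "gtilde_den w s a = 1 - bconst w * biexp s a"

lemma biexp_mult_eq: "c + c' = c'' \<Longrightarrow> d + d' = d'' \<Longrightarrow> biexp c d * biexp c' d' = biexp c'' d''"
  using biexp_mult by blast

lemma twisted_sinh_mult_gtilde_num:
  assumes zw: "z * w = 1"
  shows "twisted_sinh z (- b) * gtilde_num w (-1) b = twisted_sinh z b * gtilde_den w (-1) b"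
proof -
  let ?B = biexp
  have p1: "?B (1/2) ((1/2) * (-b)) * ?B 0 b = ?B (1/2) ((1/2) * b)" by (rule biexp_mult_eq) auto
  have p2: "?B (1/2) ((1/2) * (-b)) * ?B (-1) 0 = ?B (-1/2) ((-1/2) * b)" by (rule biexp_mult_eq) auto
  have p3: "?B (-1/2) ((-1/2) * (-b)) * ?B 0 b = ?B (-1/2) ((3/2) * b)" by (rule biexp_mult_eq) auto
  have p4: "?B (-1/2) ((-1/2) * (-b)) * ?B (-1) 0 = ?B (-3/2) ((1/2) * b)" by (rule biexp_mult_eq) auto
  have p5: "?B (1/2) ((1/2) * b) * ?B (-1) b = ?B (-1/2) ((3/2) * b)" by (rule biexp_mult_eq) auto
  have p6: "?B (-1/2) ((-1/2) * b) * ?B (-1) b = ?B (-3/2) ((1/2) * b)" by (rule biexp_mult_eq) auto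
  have zw': "bconst z * bconst w = 1" using zw by simp
  have "twisted_sinh z (- b) * gtilde_num w (-1) b =
     bconst z * (?B (1/2) ((1/2) * (-b)) * ?B 0 b)
     - (bconst z * bconst w) * (?B (1/2) ((1/2) * (-b)) * ?B (-1) 0)
     - (?B (-1/2) ((-1/2) * (-b)) * ?B 0 b) + bconst w * (?B (-1/2) ((-1/2) * (-b)) * ?B (-1) 0)"
    unfolding twisted_sinh_def gtilde_num_def by (simp add: algebra_simps)
  also have "\<dots> = bconst z * ?B (1/2) ((1/2) * b) - ?B (-1/2) ((-1/2) * b) - ?B (-1/2) ((3/2) * b)
      + bconst w * ?B (-3/2) ((1/2) * b)"
    by (simp only: p1 p2 p3 p4 zw') simp
  also have "\<dots> = bconst z * ?B (1/2) ((1/2) * b)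
     - (bconst z * bconst w) * (?B (1/2) ((1/2) * b) * ?B (-1) b)
     - ?B (-1/2) ((-1/2) * b) + bconst w * (?B (-1/2) ((-1/2) * b) * ?B (-1) b)"
    by (simp only: p5 p6 zw') simp
  also have "\<dots> = twisted_sinh z b * gtilde_den w (-1) b"
    unfolding twisted_sinh_def gtilde_den_def by (simp add: algebra_simps)
  finally show ?thesis .
qed

lemma gtilde_num_mult_eq_den_mult:
  assumes zw: "z * w = 1"
  shows "gtilde_num w (-1) b * gtilde_num z 1 b = gtilde_den w (-1) b * gtilde_den z 1 b"
proof -
  let ?B = biexp
  have p1: "?B 0 b * ?B 0 b = ?B 0 (2 * b)" by (rule biexp_mult_eq) auto
  have p2: "?B 0 b * ?B 1 0 = ?B 1 b" by (rule biexp_mult_eq) auto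
  have p3: "?B (-1) 0 * ?B 0 b = ?B (-1) b" by (rule biexp_mult_eq) auto
  have p4: "?B (-1) 0 * ?B 1 0 = 1" using biexp_mult_eq[of "-1" 1 0 0 0 0] by simp
  have p5: "?B (-1) b * ?B 1 b = ?B 0 (2 * b)" by (rule biexp_mult_eq) auto
  have zw': "bconst z * bconst w = 1" using zw by simp
  have "gtilde_num w (-1) b * gtilde_num z 1 b
      = ?B 0 b * ?B 0 b - bconst z * (?B 0 b * ?B 1 0) - bconst w * (?B (-1) 0 * ?B 0 b)
        + (bconst z * bconst w) * (?B (-1) 0 * ?B 1 0)"
    unfolding gtilde_num_def by (simp add: algebra_simps)
  also have "\<dots> = ?B 0 (2 * b) - bconst z * ?B 1 b - bconst w * ?B (-1) b + 1"
    by (simp only: p1 p2 p3 p4 zw') simp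
  also have "\<dots> = 1 - bconst z * ?B 1 b - bconst w * ?B (-1) b
      + (bconst z * bconst w) * (?B (-1) b * ?B 1 b)"
    by (simp only: p5 zw') simp
  also have "\<dots> = gtilde_den w (-1) b * gtilde_den z 1 b"
    unfolding gtilde_den_def by (simp add: algebra_simps)
  finally show ?thesis .
qed

lemma negx_kappa_factor_mult_gtilde:
  assumes b: "b \<in> {2, 0, -1}" and zz': "z * z' = 1"
  shows "negx (kappa_factor z' b) * gtilde_num z' (-1) (of_int b) * theta_denom z (of_int (- b))
       = kappa_factor z b * gtilde_den z' (-1) (of_int b) * theta_denom z (of_int b)"
proof -
  let ?Gn = "gtilde_num z' (-1)" and ?Gd = "gtilde_den z' (-1)" and ?Q = "theta_denom z"
  have z'z: "z' * z = 1" using zz' by (simp add: mult.commute)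
  have sinh: "theta_shift z (- t) * ?Q (- of_int t) * ?Gn (of_int t)
      = theta_shift z t * ?Q (of_int t) * ?Gd (of_int t)" for t
    using twisted_sinh_mult_gtilde_num[OF zz', of "of_int t"]
      theta_shift_mult_denom[of z t] theta_shift_mult_denom[of z "- t"]
    by simp
  consider "b = 2" | "b = 0" | "b = -1" using b by auto
  then show ?thesis
  proof cases
    case 1
    show ?thesis
      unfolding 1 negx_kappa_factor_2[OF z'z] unfolding kappa_factor_2
      using sinh[of 2] by (simp add: mult_ac)
  next
    case 2
    then show ?thesis by (simp add: kappa_factor_0 negx.one gtilde_num_def gtilde_den_def)
  next
    case 3
    let ?X = "negx (kappa_factor z' (-1))" and ?Y = "kappa_factor z (-1)"
    have "?X * ?Gn (-1) * ?Q 1 = ?X * ?Gn (-1) * ?Q 1 * (?Y * theta_shift z 1)"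
      by (simp add: kappa_factor_minus_1)
    also have "\<dots> = ?X * ?Y * (theta_shift z (- (-1)) * ?Q (- of_int (-1)) * ?Gn (of_int (-1)))"
      by (simp add: mult_ac)
    also have "\<dots> = ?Y * ?Gd (-1) * ?Q (-1) * (?X * theta_shift z (-1))"
      by (simp only: sinh) (simp add: mult_ac)
    finally show ?thesis
      using 3 negx_kappa_factor_minus_1[OF z'z] by simp
  qed
qed

section \<open>Passing to C((x))[[h]]\<close>

lemma to_Lh_nth [simp]: "to_Lh F $ n = fps_to_fls (F $ n)"
  by (simp add: to_Lh_def)

lemma fps_to_fls_sum: "fps_to_fls (sum f S) = (\<Sum>x\<in>S. fps_to_fls (f x))"
  by (induction S rule: infinite_finite_induct) auto

lemma to_Lh_mult: "to_Lh (F * G) = to_Lh F * to_Lh G"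
  by (rule fps_ext) (simp add: fps_mult_nth fps_to_fls_sum fls_times_fps_to_fls)

lemma to_Lh_one [simp]: "to_Lh 1 = 1"
  by (rule fps_ext) simp

lemma to_Lh_prod: "to_Lh (prod f S) = (\<Prod>x\<in>S. to_Lh (f x))"
  by (induction S rule: infinite_finite_induct) (auto simp: to_Lh_mult)

lemma fps_mult_inverse_eq_iff:
  fixes a b c d :: "'a::field fps"
  assumes b: "b $ 0 \<noteq> 0" and d: "d $ 0 \<noteq> 0"
  shows "a * inverse b = c * inverse d \<longleftrightarrow> a * d = c * b"
proof
  assume eq: "a * inverse b = c * inverse d"
  have "a * d = a * inverse b * b * d"
    using b by (simp add: inverse_mult_eq_1 mult.assoc)
  also have "\<dots> = c * b * (inverse d * d)"
    by (simp add: eq mult_ac)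
  finally show "a * d = c * b"
    using d by (simp add: inverse_mult_eq_1)
next
  assume eq: "a * d = c * b"
  have "a * inverse b = a * d * inverse b * inverse d"
    using d by (simp add: inverse_mult_eq_1' mult_ac)
  also have "\<dots> = c * (b * inverse b) * inverse d"
    by (simp add: eq mult_ac)
  finally show "a * inverse b = c * inverse d"
    using b by (simp add: inverse_mult_eq_1')
qed

lemma bexp_nth_0_nth_0 [simp]: "bexp F $ 0 $ 0 = 1"
  by (simp add: bexp_def)

lemma one_minus_fps_exp_nonzero:
  assumes "w \<noteq> 0" "s \<noteq> 0"
  shows "1 - fps_const w * fps_exp s \<noteq> (0 :: complex fps)"
proof
  assume "1 - fps_const w * fps_exp s = 0"
  then have "(1 - fps_const w * fps_exp s) $ 1 = 0" by simp
  then show False using assms by simp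
qed

lemma gtilde_num_nth_0_nonzero: "w \<noteq> 0 \<Longrightarrow> s \<noteq> 0 \<Longrightarrow> gtilde_num w s a $ 0 \<noteq> 0"
  using one_minus_fps_exp_nonzero[of w s] by (simp add: gtilde_num_def biexp_def)

lemma gtilde_den_nth_0_nonzero: "w \<noteq> 0 \<Longrightarrow> s \<noteq> 0 \<Longrightarrow> gtilde_den w s a $ 0 \<noteq> 0"
  using one_minus_fps_exp_nonzero[of w s] by (simp add: gtilde_den_def biexp_def)

definition gtilde_factor :: "complex \<Rightarrow> complex \<Rightarrow> int \<Rightarrow> complex fls fps" where
  "gtilde_factor w s a =
     to_Lh (gtilde_num w s (of_int a)) * inverse (to_Lh (gtilde_den w s (of_int a)))"

lemma gtilde_exp_eq_prod:
  "gtilde_exp A \<mu> i j s = (\<Prod>k<perm_order \<mu>.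
     gtilde_factor (inverse (xi (perm_order \<mu>) ^ k)) s (A ((\<mu> ^^ k) i) j))"
  by (simp add: gtilde_exp_def gtilde_factor_def gtilde_num_def gtilde_den_def power_inverse Let_def)

lemma inverse_gtilde_factor:
  assumes z: "z \<noteq> 0"
  shows "inverse (gtilde_factor (inverse z) (-1) b) = gtilde_factor z 1 b"
proof -
  let ?n1 = "to_Lh (gtilde_num (inverse z) (-1) (of_int b))"
  let ?d1 = "to_Lh (gtilde_den (inverse z) (-1) (of_int b))"
  let ?n2 = "to_Lh (gtilde_num z 1 (of_int b))"
  let ?d2 = "to_Lh (gtilde_den z 1 (of_int b))"
  have units: "?n1 $ 0 \<noteq> 0" "?d1 $ 0 \<noteq> 0" "?d2 $ 0 \<noteq> 0"
    using z by (simp_all add: gtilde_num_nth_0_nonzero gtilde_den_nth_0_nonzero)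
  have "?n1 * ?n2 = ?d1 * ?d2"
    using arg_cong[OF gtilde_num_mult_eq_den_mult[of z "inverse z" "of_int b"], of to_Lh] z
    by (simp add: to_Lh_mult)
  then have "?d1 * inverse ?n1 = ?n2 * inverse ?d2"
    using units by (simp add: fps_mult_inverse_eq_iff mult_ac)
  then show ?thesis
    using units by (simp add: gtilde_factor_def fps_inverse_mult mult.commute)
qed

lemma theta_denom_ratio:
  "to_Lh (theta_denom z (- of_int b)) * inverse (to_Lh (theta_denom z (of_int b)))
     = (if z = 1 then xfrac b else 1)"
proof (cases "z = 1")
  case True
  have "to_Lh (theta_denom z (of_int c)) = fps_const fls_X + of_int c * fps_X" for c
    using True by (intro fps_ext) (simp add: theta_denom_def fps_of_int[symmetric] fls_of_int)
  from this[of b] this[of "- b"] True show ?thesis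
    by (simp add: xfrac_def)
next
  case False
  have "to_Lh (theta_denom z (of_int b)) $ 0 \<noteq> 0"
    by (simp add: theta_denom_nth_0_nonzero)
  with False show ?thesis
    by (simp add: theta_denom_def inverse_mult_eq_1')
qed

lemma negx_kappa_factor_ratio:
  assumes b: "b \<in> {2, 0, -1}" and z: "z \<noteq> 0"
  shows "to_Lh (negx (kappa_factor (inverse z) b)) * inverse (to_Lh (kappa_factor z b))
       * (to_Lh (theta_denom z (- of_int b)) * inverse (to_Lh (theta_denom z (of_int b))))
     = inverse (gtilde_factor (inverse z) (-1) b)"
proof -
  let ?Y = "to_Lh (negx (kappa_factor (inverse z) b))" and ?K = "to_Lh (kappa_factor z b)"
  let ?Qm = "to_Lh (theta_denom z (- of_int b))" and ?Qp = "to_Lh (theta_denom z (of_int b))"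
  let ?n = "to_Lh (gtilde_num (inverse z) (-1) (of_int b))"
  let ?d = "to_Lh (gtilde_den (inverse z) (-1) (of_int b))"
  have "kappa_factor z b $ 0 \<noteq> 0"
  proof
    assume "kappa_factor z b $ 0 = 0"
    then have "kappa_factor z b $ 0 $ 0 = 0" by simp
    then show False by (simp add: kappa_factor_def)
  qed
  then have units: "?K $ 0 \<noteq> 0" "?Qp $ 0 \<noteq> 0" "?n $ 0 \<noteq> 0" "?d $ 0 \<noteq> 0"
    using z by (simp_all add: theta_denom_nth_0_nonzero gtilde_num_nth_0_nonzero gtilde_den_nth_0_nonzero)
  have "?Y * ?n * ?Qm = ?K * ?d * ?Qp"
    using arg_cong[OF negx_kappa_factor_mult_gtilde[OF b, of z "inverse z"], of to_Lh] z
    by (simp add: to_Lh_mult)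
  then have "?Y * ?Qm * inverse (?K * ?Qp) = ?d * inverse ?n"
    using units by (subst fps_mult_inverse_eq_iff) (simp_all add: mult_ac)
  then show ?thesis
    using units by (simp add: gtilde_factor_def fps_inverse_mult mult_ac)
qed

lemma prod_negx_kappa_factor_ratio:
  fixes N :: nat
  assumes "0 < N" and z: "\<forall>k<N. z k \<noteq> 0" "\<forall>k<N. z k = 1 \<longleftrightarrow> k = 0"
    and b: "\<forall>k<N. b k \<in> {2, 0, -1}"
  shows "to_Lh (negx (\<Prod>k<N. kappa_factor (inverse (z k)) (b k)))
           * inverse (to_Lh (\<Prod>k<N. kappa_factor (z k) (b k))) * xfrac (b 0)
       = inverse (\<Prod>k<N. gtilde_factor (inverse (z k)) (-1) (b k))"
proof -
  let ?R = "\<lambda>k. to_Lh (theta_denom (z k) (- of_int (b k)))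
                * inverse (to_Lh (theta_denom (z k) (of_int (b k))))"
  have "(\<Prod>k<N. ?R k) = (\<Prod>k<N. if k = 0 then xfrac (b k) else 1)"
  proof (rule prod.cong)
    fix k assume "k \<in> {..<N}"
    then show "?R k = (if k = 0 then xfrac (b k) else 1)"
      using theta_denom_ratio[of "z k" "b k"] z(2) by simp
  qed simp
  also have "\<dots> = xfrac (b 0)"
    using assms(1) by (simp add: prod.delta)
  finally have R: "(\<Prod>k<N. ?R k) = xfrac (b 0)" .
  have "inverse (\<Prod>k<N. gtilde_factor (inverse (z k)) (-1) (b k))
      = (\<Prod>k<N. to_Lh (negx (kappa_factor (inverse (z k)) (b k)))
                 * inverse (to_Lh (kappa_factor (z k) (b k))) * ?R k)"
    unfolding inverse_prod_fps using z(1) b by (intro prod.cong) (simp_all add: negx_kappa_factor_ratio)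
  also have "\<dots> = (\<Prod>k<N. to_Lh (negx (kappa_factor (inverse (z k)) (b k))))
      * (\<Prod>k<N. inverse (to_Lh (kappa_factor (z k) (b k)))) * (\<Prod>k<N. ?R k)"
    by (simp only: prod.distrib)
  finally show ?thesis
    by (simp only: R inverse_prod_fps negx.prod to_Lh_prod)
qed

lemma prod_inverse_gtilde_factor:
  "\<forall>k<(N::nat). z k \<noteq> 0 \<Longrightarrow>
     inverse (\<Prod>k<N. gtilde_factor (inverse (z k)) (-1) (b k)) = (\<Prod>k<N. gtilde_factor (z k) 1 (b k))"
  unfolding inverse_prod_fps by (intro prod.cong) (simp_all add: inverse_gtilde_factor)

lemma qshift_prod_kappa_factor:
  "\<forall>k<(N::nat). z k \<noteq> 0 \<Longrightarrow> \<forall>k<N. b k \<in> {2, 0, -1} \<Longrightarrow>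
     qshift (-2) (\<Prod>k<N. kappa_factor (inverse (z k)) (b k)) = negx (\<Prod>k<N. kappa_factor (z k) (b k))"
  unfolding qshift.prod negx.prod by (intro prod.cong) (simp_all add: qshift_kappa_factor)

section \<open>Roots of unity and the orbits of mu\<close>

lemma xi_nonzero [simp]: "xi N \<noteq> 0"
  by (simp add: xi_def)

lemma xi_power_eq_1_iff:
  assumes "0 < N"
  shows "xi N ^ k = 1 \<longleftrightarrow> N dvd k"
proof -
  have "xi N ^ k = exp (2 * of_real pi * \<i> * of_nat k / of_nat N)"
    by (simp add: xi_def exp_of_nat_mult[symmetric] mult_ac)
  then show ?thesis
    using complex_root_unity_eq_1[of N k] assms by simp
qed

lemma inverse_xi_power:
  assumes "0 < N" "k < N"
  shows "inverse (xi N ^ k) = xi N ^ ((N - k) mod N)"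
proof (rule inverse_unique)
  have "N dvd k + (N - k) mod N"
    using assms by (cases "k = 0") auto
  then show "xi N ^ k * xi N ^ ((N - k) mod N) = 1"
    using assms(1) by (simp add: xi_power_eq_1_iff flip: power_add)
qed

lemma theta_eq_log_theta_exp:
  assumes "k < N"
  shows "theta N k = fps_log1 (theta_exp (xi N ^ k))"
proof -
  have "xi N ^ k = 1 \<longleftrightarrow> k = 0"
    using assms xi_power_eq_1_iff[of N k] by (auto dest: dvd_imp_le)
  then show ?thesis by (simp add: theta_def theta_exp_def)
qed

lemma vanishes_below_qnum_op: "vanishes_below d G \<Longrightarrow> vanishes_below d (qnum_op n G)"
  by (auto simp: qnum_op_def intro!: vanishes_below_sum vanishes_below_uminus vanishes_below_qshift)

lemma kappa_eq_prod:
  "kappa A \<mu> i j = (\<Prod>k<perm_order \<mu>.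
     kappa_factor (xi (perm_order \<mu>) ^ k) (A ((\<mu> ^^ k) i) j))"
proof -
  have "vanishes_below 1 (qnum_op b (qshift 1 (fps_const (theta N k))))" for b N k
    by (intro vanishes_below_qnum_op vanishes_below_qshift vanishes_below_1_fps_const)
      (simp add: theta_def)
  then have "kappa A \<mu> i j = (\<Prod>k<perm_order \<mu>.
      bexp (qnum_op (A ((\<mu> ^^ k) i) j) (qshift 1 (fps_const (theta (perm_order \<mu>) k)))))"
    unfolding kappa_def Let_def by (rule bexp_sum)
  then show ?thesis
    by (simp add: kappa_factor_def theta_eq_log_theta_exp)
qed

lemma perm_order_bij:
  fixes \<mu> :: "'i::finite \<Rightarrow> 'i"
  assumes "bij \<mu>"
  shows "0 < perm_order \<mu>" "\<mu> ^^ perm_order \<mu> = id"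
proof -
  have "\<mu> permutes UNIV"
    using assms by (intro bij_imp_permutes) simp_all
  then have "permutation \<mu>"
    by (auto simp: permutation_permutes)
  then obtain n where "\<mu> ^^ n = id" "0 < n"
    by (rule permutation_is_nilpotent)
  then have "\<exists>n. 0 < n \<and> \<mu> ^^ n = id"
    by blast
  then have "0 < perm_order \<mu> \<and> \<mu> ^^ perm_order \<mu> = id"
    unfolding perm_order_def by (rule LeastI_ex)
  then show "0 < perm_order \<mu>" "\<mu> ^^ perm_order \<mu> = id" by simp_all
qed

lemma funpow_invariant:
  "\<forall>a b. A (\<mu> a) (\<mu> b) = A a b \<Longrightarrow> A ((\<mu> ^^ n) a) ((\<mu> ^^ n) b) = A a b"
  by (induction n) simp_all

text \<open>Reindexing by k -> -k mod N: this inverts xi^k and, by the symmetry and mu-invariance of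
  A, exchanges the roles of i and j.\<close>

lemma prod_orbit_reflect:
  assumes sym: "\<forall>a b. A a b = A b a" and inv: "\<forall>a b. A (\<mu> a) (\<mu> b) = A a b"
    and N: "0 < N" "\<mu> ^^ N = id"
  shows "(\<Prod>k<N. h (xi N ^ k) (A ((\<mu> ^^ k) i) j))
       = (\<Prod>k<N. h (inverse (xi N ^ k)) (A ((\<mu> ^^ k) j) i))"
proof (rule prod.reindex_bij_witness[of _ "\<lambda>k. (N - k) mod N" "\<lambda>k. (N - k) mod N"])
  fix k assume "k \<in> {..<N}"
  then have k: "k < N" by simp
  define r where "r = (N - k) mod N"
  have r: "r < N" "(N - r) mod N = k"
    using k by (auto simp: r_def mod_if)
  have "(\<mu> ^^ k) ((\<mu> ^^ r) j) = (\<mu> ^^ (k + r)) j"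
    by (simp add: funpow_add)
  also have "\<dots> = j"
    using k N by (cases "k = 0") (auto simp: r_def)
  finally have orbit: "(\<mu> ^^ k) ((\<mu> ^^ r) j) = j" .
  have "A ((\<mu> ^^ r) j) i = A ((\<mu> ^^ k) ((\<mu> ^^ r) j)) ((\<mu> ^^ k) i)"
    by (simp add: funpow_invariant[OF inv])
  also have "\<dots> = A ((\<mu> ^^ k) i) j"
    using sym by (simp add: orbit)
  finally have "A ((\<mu> ^^ r) j) i = A ((\<mu> ^^ k) i) j" .
  moreover have "inverse (xi N ^ r) = xi N ^ k"
    using r N(1) by (simp add: inverse_xi_power)
  ultimately show "h (inverse (xi N ^ r)) (A ((\<mu> ^^ r) j) i) = h (xi N ^ k) (A ((\<mu> ^^ k) i) j)"
    by simp
qed (auto simp: mod_if)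

lemma cartan_ADE_entries: "cartan_ADE A \<Longrightarrow> A a b \<in> {2, 0, -1}"
  unfolding cartan_ADE_def by (cases "a = b") auto

theorem lemma7p1:
  fixes A :: "'i::finite \<Rightarrow> 'i \<Rightarrow> int" and \<mu> :: "'i \<Rightarrow> 'i" and i j :: 'i
  assumes "cartan_ADE A"
    and "bij \<mu>"
    and "\<forall>a b. A (\<mu> a) (\<mu> b) = A a b"
  shows "to_Lh (negx (kappa A \<mu> i j)) * inverse (to_Lh (kappa A \<mu> j i)) * xfrac (A i j)
           = inverse (gtilde_exp A \<mu> j i (-1))
       \<and> inverse (gtilde_exp A \<mu> j i (-1)) = gtilde_exp A \<mu> i j 1
       \<and> qshift (-2) (kappa A \<mu> i j) = negx (kappa A \<mu> j i)"
proof -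
  define N where "N = perm_order \<mu>"
  have N: "0 < N" "\<mu> ^^ N = id"
    using perm_order_bij[OF assms(2)] by (simp_all add: N_def)
  have sym: "\<forall>a b. A a b = A b a"
    using assms(1) by (simp add: cartan_ADE_def)
  define z where "z k = xi N ^ k" for k
  define b where "b k = A ((\<mu> ^^ k) j) i" for k
  have z: "\<forall>k<N. z k \<noteq> 0" "\<forall>k<N. z k = 1 \<longleftrightarrow> k = 0"
    using N(1) by (auto simp: z_def xi_power_eq_1_iff dest: dvd_imp_le)
  have b: "\<forall>k<N. b k \<in> {2, 0, -1}"
    unfolding b_def using cartan_ADE_entries[OF assms(1)] by blast
  have kappa_ij: "kappa A \<mu> i j = (\<Prod>k<N. kappa_factor (inverse (z k)) (b k))"
    unfolding kappa_eq_prod N_def[symmetric] z_def b_def by (rule prod_orbit_reflect[OF sym assms(3) N])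
  have gtilde_ij: "gtilde_exp A \<mu> i j 1 = (\<Prod>k<N. gtilde_factor (z k) 1 (b k))"
    using prod_orbit_reflect[OF sym assms(3) N, of "\<lambda>z. gtilde_factor (inverse z) 1" i j]
    by (simp add: gtilde_exp_eq_prod N_def[symmetric] z_def b_def)
  have "kappa A \<mu> j i = (\<Prod>k<N. kappa_factor (z k) (b k))"
    "gtilde_exp A \<mu> j i (-1) = (\<Prod>k<N. gtilde_factor (inverse (z k)) (-1) (b k))"
    "A i j = b 0"
    using sym by (simp_all add: kappa_eq_prod gtilde_exp_eq_prod N_def z_def b_def)
  with kappa_ij gtilde_ij show ?thesis
    using prod_negx_kappa_factor_ratio[OF N(1) z b] prod_inverse_gtilde_factor[OF z(1)]
      qshift_prod_kappa_factor[OF z(1) b]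
    by simp
qed

end
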